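(* Let $n\geq 2$ and number the crossings of the $n$-twist loop $1,\dots,n$ in any fixed order. The set of words of the states of the $n$-twist loop consisting of exactly two closed curves is \[ \mathcal{T}_n=\left\{1^k01^{n-k-1}\;\middle|\; 0\leq k\leq n-1\right\}. \]
   Context: A (shadow) diagram is a finite collection of closed curves in the plane in general position whose only singularities are finitely many transverse double points, called crossings; over/under information is ignored. At a crossing four corners of complementary regions meet, forming two pairs of opposite corners. Splitting a crossing replaces a small neighbourhood of it by two disjoint arcs in one of two ways, each merging one pair of opposite corners into a channel. A state is the result of choosing a split at every crossing; it is a disjoint union of simple closed curves. The $n$-twist loop: take a horizontal row of $n$ crossings formed by two strands twisting around each other (consecutive crossings bound a bigon), and join the two left endpoints to each other by an arc and the two right endpoints to each other by an arc, creating no new crossings. At every crossing, the upper and lower corners belong to the unbounded region. The $A$-split at a crossing is the split merging its upper and lower corners (opening the channel through the unbounded region); the $B$-split merges its left and right corners. With crossings numbered $1,\dots,n$, a state is recorded by the binary word whose $i$-th letter is $0$ if an $A$-split is applied at crossing $i$ and $1$ if a $B$-split is applied. Notation: $\sigma^k$ denotes $k$ consecutive copies of the letter $\sigma$ (empty if $k\leq 0$), words are concatenated. *)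

theory Defs
  imports "HOL-Combinatorics.Permutations"
begin

text \<open>Crossings sit at positions 1..n
from left to right along the row. Each crossing has four arc endpoints
(north-west, north-east, south-west, south-east). The diagram arcs join
NE of position j to NW of position j+1 and SE of position j to SW of position j+1
(these two arcs bound the bigon between consecutive crossings), the left arc joins
NW and SW of position 1, the right arc joins NE and SE of position n.
The A-split (letter 0) merges the upper and lower corners, i.e. replaces the
crossing by the arcs NW--SW and NE--SE; the B-split (letter 1) merges the left and
right corners, i.e. uses the arcs NW--NE and SW--SE.
A state is a disjoint union of simple closed curves; these are the connected
components of the resulting 2-regular graph on the endpoints.\<close>

datatype corner = NW | NE | SW | SE

definition twist_vertices :: "nat \<Rightarrow> (nat \<times> corner) set" where
  "twist_vertices n = {1..n} \<times> UNIV"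

definition twist_state_arcs :: "nat \<Rightarrow> (nat \<Rightarrow> nat) \<Rightarrow> ((nat \<times> corner) \<times> (nat \<times> corner)) set" where
  "twist_state_arcs n s =
     {((j, NE), (Suc j, NW)) | j. 1 \<le> j \<and> j < n}
   \<union> {((j, SE), (Suc j, SW)) | j. 1 \<le> j \<and> j < n}
   \<union> {((1, NW), (1, SW)), ((n, NE), (n, SE))}
   \<union> {((j, NW), (j, SW)) | j. j \<in> {1..n} \<and> s j = 0}
   \<union> {((j, NE), (j, SE)) | j. j \<in> {1..n} \<and> s j = 0}
   \<union> {((j, NW), (j, NE)) | j. j \<in> {1..n} \<and> s j = 1}
   \<union> {((j, SW), (j, SE)) | j. j \<in> {1..n} \<and> s j = 1}"

definition num_curves :: "nat \<Rightarrow> (nat \<Rightarrow> nat) \<Rightarrow> nat" where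
  "num_curves n s =
     (let E = twist_state_arcs n s in
      card {((E \<union> E\<inverse>)\<^sup>*) `` {v} | v. v \<in> twist_vertices n})"

text \<open>The crossings carry labels 1..n given by a numbering p (a permutation of
{1..n}): the crossing at position j has number p j. A word w (a list over {0,1}
of length n) has i-th letter (index i-1) for crossing number i.\<close>
definition word_state :: "(nat \<Rightarrow> nat) \<Rightarrow> nat list \<Rightarrow> nat \<Rightarrow> nat" where
  "word_state p w j = w ! (p j - 1)"

definition T_set :: "nat \<Rightarrow> nat list set" where
  "T_set n = {replicate k 1 @ [0] @ replicate (n - k - 1) 1 | k. k \<le> n - 1}"

end

theory Submission
  imports Defs
begin

text \<open>Label every arc endpoint by the number of A-splits strictly to its left: the
endpoints on the west side of crossing j get the count over crossings 1..j-1, those on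
the east side the count over 1..j. Every arc of a state preserves this label. Conversely,
the west side of each crossing is joined by the left arc and induction along the row, so
every endpoint is joined to the top point just right of some crossing, and consecutive
top points are joined through each B-split. Hence the curves of a state correspond to the
labels 0, ..., a, where a is the number of A-splits, and a state has exactly two curves
iff its word contains exactly one 0.\<close>

lemma card_classes_eq_card_labels:
  fixes E :: "'a rel" and f :: "'a \<Rightarrow> 'b"
  assumes joined_iff: "\<And>u v. u \<in> V \<Longrightarrow> v \<in> V \<Longrightarrow> (u, v) \<in> (E \<union> E\<inverse>)\<^sup>* \<longleftrightarrow> f u = f v"
  shows "card {(E \<union> E\<inverse>)\<^sup>* `` {v} | v. v \<in> V} = card (f ` V)"
proof -
  let ?R = "(E \<union> E\<inverse>)\<^sup>*"
  have "equiv UNIV ?R"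
    by (simp add: equiv_def refl_rtrancl sym_rtrancl sym_Un_converse trans_rtrancl)
  then have class_eq: "?R `` {u} = ?R `` {v} \<longleftrightarrow> f u = f v" if "u \<in> V" "v \<in> V" for u v
    using eq_equiv_class_iff[of UNIV ?R u v] joined_iff that by simp
  define g where "g = (\<lambda>y. ?R `` {inv_into V f y})"
  have g_f: "g (f v) = ?R `` {v}" if "v \<in> V" for v
    using that class_eq[of "inv_into V f (f v)" v]
    by (simp add: g_def inv_into_into f_inv_into_f)
  have "inj_on g (f ` V)"
    by (auto simp: inj_on_def g_f class_eq)
  moreover have "g ` f ` V = {?R `` {v} | v. v \<in> V}"
    by (auto simp: g_f image_image)
  ultimately show ?thesis
    by (metis card_image)
qed

lemma interval_subset_image_of_unit_steps:
  fixes f :: "nat \<Rightarrow> nat"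
  assumes "f 0 = 0" and "\<And>t. t < m \<Longrightarrow> f (Suc t) \<le> Suc (f t)"
  shows "{0..f m} \<subseteq> f ` {0..m}"
  using assms(2)
proof (induction m)
  case 0
  then show ?case using assms(1) by simp
next
  case (Suc m)
  then have "{0..f (Suc m)} \<subseteq> insert (f (Suc m)) {0..f m}"
    by fastforce
  also have "\<dots> \<subseteq> f ` {0..Suc m}"
    using Suc by fastforce
  finally show ?case .
qed

definition zeros_upto :: "(nat \<Rightarrow> nat) \<Rightarrow> nat \<Rightarrow> nat" where
  "zeros_upto s t = card {i \<in> {1..t}. s i = 0}"

lemma zeros_upto_0 [simp]: "zeros_upto s 0 = 0"
  by (simp add: zeros_upto_def)

lemma zeros_upto_Suc:
  "zeros_upto s (Suc t) = zeros_upto s t + (if s (Suc t) = 0 then 1 else 0)"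
proof -
  have "{i \<in> {1..Suc t}. s i = 0} =
      {i \<in> {1..t}. s i = 0} \<union> (if s (Suc t) = 0 then {Suc t} else {})"
    by (auto simp: le_Suc_eq)
  then show ?thesis
    by (simp add: zeros_upto_def)
qed

lemma zeros_upto_Suc_eq_iff: "zeros_upto s (Suc t) = zeros_upto s t \<longleftrightarrow> s (Suc t) \<noteq> 0"
  by (simp add: zeros_upto_Suc)

lemma zeros_upto_if_nonzero: "s j \<noteq> 0 \<Longrightarrow> zeros_upto s j = zeros_upto s (j - 1)"
  by (cases j) (simp_all add: zeros_upto_Suc)

lemma zeros_upto_mono: "a \<le> b \<Longrightarrow> zeros_upto s a \<le> zeros_upto s b"
  unfolding zeros_upto_def by (rule card_mono) auto

definition endpoint_level :: "(nat \<Rightarrow> nat) \<Rightarrow> nat \<times> corner \<Rightarrow> nat" where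
  "endpoint_level s v = (case snd v of
      NW \<Rightarrow> zeros_upto s (fst v - 1) | SW \<Rightarrow> zeros_upto s (fst v - 1)
    | NE \<Rightarrow> zeros_upto s (fst v) | SE \<Rightarrow> zeros_upto s (fst v))"

text \<open>The top endpoint just right of crossing t; for t = 0, the top end of the left arc.\<close>
definition top_after :: "nat \<Rightarrow> nat \<times> corner" where
  "top_after t = (if t = 0 then (1, NW) else (t, NE))"

lemma endpoint_level_top_after [simp]: "endpoint_level s (top_after t) = zeros_upto s t"
  by (simp add: top_after_def endpoint_level_def)

context
  fixes n :: nat and s :: "nat \<Rightarrow> nat"
  assumes n_pos: "1 \<le> n" and splits_01: "\<forall>j\<in>{1..n}. s j = 0 \<or> s j = 1"
begin

abbreviation joined :: "((nat \<times> corner) \<times> (nat \<times> corner)) set" where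
  "joined \<equiv> (twist_state_arcs n s \<union> (twist_state_arcs n s)\<inverse>)\<^sup>*"

lemma joined_sym: "(u, v) \<in> joined \<Longrightarrow> (v, u) \<in> joined"
  by (meson sym_Un_converse sym_rtrancl symD)

lemma arcs_joined:
  "((1, NW), (1, SW)) \<in> joined"
  "1 \<le> j \<Longrightarrow> j < n \<Longrightarrow> ((j, NE), (Suc j, NW)) \<in> joined"
  "1 \<le> j \<Longrightarrow> j < n \<Longrightarrow> ((j, SE), (Suc j, SW)) \<in> joined"
  "j \<in> {1..n} \<Longrightarrow> s j = 0 \<Longrightarrow> ((j, NE), (j, SE)) \<in> joined"
  "j \<in> {1..n} \<Longrightarrow> s j = 1 \<Longrightarrow> ((j, NW), (j, NE)) \<in> joined"
  "j \<in> {1..n} \<Longrightarrow> s j = 1 \<Longrightarrow> ((j, SW), (j, SE)) \<in> joined"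
  unfolding twist_state_arcs_def by (intro r_into_rtrancl; auto)+

lemma endpoint_level_arc:
  "(u, v) \<in> twist_state_arcs n s \<Longrightarrow> endpoint_level s u = endpoint_level s v"
  unfolding twist_state_arcs_def
  by (auto simp: endpoint_level_def zeros_upto_if_nonzero)

lemma endpoint_level_joined: "(u, v) \<in> joined \<Longrightarrow> endpoint_level s u = endpoint_level s v"
  by (induction rule: rtrancl_induct) (auto dest: endpoint_level_arc)

lemma east_side_joined_if_west:
  assumes j: "j \<in> {1..n}" and west: "((j, NW), (j, SW)) \<in> joined"
  shows "((j, NE), (j, SE)) \<in> joined"
proof (cases "s j = 0")
  case True
  then show ?thesis
    using j arcs_joined(4) by blast
next
  case False
  then have "s j = 1" using bspec[OF splits_01 j] by simp
  then have "((j, NE), (j, NW)) \<in> joined" "((j, SW), (j, SE)) \<in> joined"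
    using j arcs_joined(5,6) joined_sym by blast+
  then show ?thesis
    using west by (meson rtrancl_trans)
qed

lemma west_side_joined: "1 \<le> j \<Longrightarrow> j \<le> n \<Longrightarrow> ((j, NW), (j, SW)) \<in> joined"
proof (induction j rule: nat_induct_at_least)
  case base
  show ?case by (rule arcs_joined(1))
next
  case (Suc j)
  then have "((j, NE), (j, SE)) \<in> joined"
    by (intro east_side_joined_if_west) auto
  moreover have "((Suc j, NW), (j, NE)) \<in> joined" "((j, SE), (Suc j, SW)) \<in> joined"
    using Suc arcs_joined(2,3)[of j] joined_sym by auto
  ultimately show ?case by (meson rtrancl_trans)
qed

lemma west_joined_top_after:
  assumes "j \<in> {1..n}"
  shows "((j, NW), top_after (j - 1)) \<in> joined"
proof (cases "j = 1")
  case True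
  then show ?thesis by (simp add: top_after_def)
next
  case False
  then have "((j - 1, NE), (Suc (j - 1), NW)) \<in> joined"
    using assms by (intro arcs_joined(2)) auto
  then show ?thesis
    using joined_sym False assms by (simp add: top_after_def)
qed

lemma joined_top_after: "v \<in> twist_vertices n \<Longrightarrow> \<exists>t \<le> n. (v, top_after t) \<in> joined"
proof -
  assume "v \<in> twist_vertices n"
  then obtain j c where v: "v = (j, c)" and j: "j \<in> {1..n}"
    by (auto simp: twist_vertices_def)
  have west_sides: "((j, NW), (j, SW)) \<in> joined"
    using j west_side_joined by simp
  have west: "((j, SW), top_after (j - 1)) \<in> joined" "((j, NW), top_after (j - 1)) \<in> joined"
    using joined_sym[OF west_sides] west_joined_top_after[OF j] by (auto intro: rtrancl_trans)
  have east: "((j, SE), top_after j) \<in> joined" "((j, NE), top_after j) \<in> joined"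
    using joined_sym[OF east_side_joined_if_west[OF j west_sides]] j
    by (simp_all add: top_after_def)
  have "j - 1 \<le> n" "j \<le> n"
    using j by auto
  then show ?thesis
    using west east v by (cases c) blast+
qed

lemma top_after_joined_if_same_zeros:
  "a \<le> b \<Longrightarrow> b \<le> n \<Longrightarrow> zeros_upto s a = zeros_upto s b
    \<Longrightarrow> (top_after a, top_after b) \<in> joined"
proof (induction b)
  case 0
  then show ?case by simp
next
  case (Suc b)
  show ?case
  proof (cases "a = Suc b")
    case False
    then have "a \<le> b" using Suc.prems by simp
    then have "zeros_upto s a \<le> zeros_upto s b" "zeros_upto s b \<le> zeros_upto s (Suc b)"
      by (simp_all add: zeros_upto_mono)
    then have same: "zeros_upto s a = zeros_upto s b" "zeros_upto s b = zeros_upto s (Suc b)"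
      using Suc.prems(3) by linarith+
    have "s (Suc b) = 1"
      using bspec[OF splits_01, of "Suc b"] Suc.prems zeros_upto_Suc_eq_iff[of s b] same(2)
      by auto
    then have "((Suc b, NW), top_after (Suc b)) \<in> joined"
      using Suc.prems arcs_joined(5) by (simp add: top_after_def)
    moreover have "(top_after b, (Suc b, NW)) \<in> joined"
      using joined_sym[OF west_joined_top_after[of "Suc b"]] Suc.prems by simp
    ultimately have "(top_after b, top_after (Suc b)) \<in> joined"
      by (rule rtrancl_trans[rotated])
    moreover have "(top_after a, top_after b) \<in> joined"
      using Suc.IH[OF \<open>a \<le> b\<close> _ same(1)] Suc.prems by simp
    ultimately show ?thesis by (meson rtrancl_trans)
  qed simp
qed

lemma joined_iff_same_level:
  assumes u: "u \<in> twist_vertices n" and v: "v \<in> twist_vertices n"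
  shows "(u, v) \<in> joined \<longleftrightarrow> endpoint_level s u = endpoint_level s v"
proof
  assume "(u, v) \<in> joined"
  then show "endpoint_level s u = endpoint_level s v" by (rule endpoint_level_joined)
next
  assume same: "endpoint_level s u = endpoint_level s v"
  obtain a where a: "a \<le> n" "(u, top_after a) \<in> joined" using joined_top_after u by blast
  obtain b where b: "b \<le> n" "(v, top_after b) \<in> joined" using joined_top_after v by blast
  have "zeros_upto s a = zeros_upto s b"
    using same endpoint_level_joined[OF a(2)] endpoint_level_joined[OF b(2)] by simp
  then have "(top_after a, top_after b) \<in> joined"
    using a b top_after_joined_if_same_zeros[of a b] top_after_joined_if_same_zeros[of b a]
      joined_sym nat_le_linear by metis
  then show "(u, v) \<in> joined"
    using a(2) joined_sym[OF b(2)] by (meson rtrancl_trans)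
qed

lemma endpoint_levels: "endpoint_level s ` twist_vertices n = {0..zeros_upto s n}"
proof
  show "endpoint_level s ` twist_vertices n \<subseteq> {0..zeros_upto s n}"
    by (auto simp: endpoint_level_def twist_vertices_def zeros_upto_mono split: corner.splits)
next
  have "{0..zeros_upto s n} \<subseteq> zeros_upto s ` {0..n}"
    by (rule interval_subset_image_of_unit_steps) (simp_all add: zeros_upto_Suc)
  also have "\<dots> \<subseteq> endpoint_level s ` twist_vertices n"
  proof
    fix x assume "x \<in> zeros_upto s ` {0..n}"
    then obtain t where "t \<le> n" "x = endpoint_level s (top_after t)" by auto
    moreover have "top_after t \<in> twist_vertices n"
      using \<open>t \<le> n\<close> n_pos by (simp add: top_after_def twist_vertices_def)
    ultimately show "x \<in> endpoint_level s ` twist_vertices n" by blast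
  qed
  finally show "{0..zeros_upto s n} \<subseteq> endpoint_level s ` twist_vertices n" .
qed

lemma num_curves_eq_Suc_zeros: "num_curves n s = Suc (zeros_upto s n)"
  using card_classes_eq_card_labels[of "twist_vertices n", OF joined_iff_same_level]
  by (simp add: num_curves_def endpoint_levels)

end

lemma word_state_in_set:
  assumes "p permutes {1..n}" and "length w = n" and "j \<in> {1..n}"
  shows "word_state p w j \<in> set w"
proof -
  have "p j \<in> {1..n}"
    using permutes_in_image[OF assms(1)] assms(3) by simp
  then have "p j - 1 < length w"
    using assms(2) by auto
  then show ?thesis
    unfolding word_state_def by (rule nth_mem)
qed

lemma zeros_upto_word_state:
  assumes p: "p permutes {1..n}"
  shows "zeros_upto (word_state p w) n = card {k. k < n \<and> w ! k = 0}"
proof -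
  have "{i \<in> {1..n}. word_state p w i = 0} = p -` {m \<in> {1..n}. w ! (m - 1) = 0}"
    using permutes_in_image[OF p] by (auto simp: word_state_def)
  then have "zeros_upto (word_state p w) n = card (p -` {m \<in> {1..n}. w ! (m - 1) = 0})"
    by (simp only: zeros_upto_def)
  also have "\<dots> = card {m \<in> {1..n}. w ! (m - 1) = 0}"
    using permutes_surj[OF p] by (intro card_vimage_inj permutes_inj[OF p]) simp
  also have "{m \<in> {1..n}. w ! (m - 1) = 0} = Suc ` {k. k < n \<and> w ! k = 0}"
    by (force simp: image_iff Suc_le_eq)
  finally show ?thesis
    by (simp add: card_image)
qed

lemma nth_single_zero_word:
  "i < n \<Longrightarrow> k < n \<Longrightarrow>
    (replicate k (1::nat) @ [0] @ replicate (n - k - 1) 1) ! i = (if i = k then 0 else 1)"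
  by (auto simp: nth_append)

lemma T_set_iff_one_zero:
  assumes "length w = n" and "set w \<subseteq> {0, 1}"
  shows "w \<in> T_set n \<longleftrightarrow> card {k. k < n \<and> w ! k = 0} = 1"
proof
  assume "w \<in> T_set n"
  then obtain k where w: "w = replicate k 1 @ [0] @ replicate (n - k - 1) 1"
    unfolding T_set_def by auto
  have "k < n"
    using arg_cong[OF w, of length] assms(1) by simp
  have "w ! i = (if i = k then 0 else 1)" if "i < n" for i
    using nth_single_zero_word[OF that \<open>k < n\<close>] w by simp
  then have "{i. i < n \<and> w ! i = 0} = {k}"
    using \<open>k < n\<close> by (auto split: if_splits)
  then show "card {k. k < n \<and> w ! k = 0} = 1" by simp
next
  assume "card {k. k < n \<and> w ! k = 0} = 1"
  then obtain k where k: "{i. i < n \<and> w ! i = 0} = {k}"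
    by (rule card_1_singletonE)
  then have "k < n" by auto
  have w_nth: "w ! i = (if i = k then 0 else 1)" if "i < n" for i
  proof -
    have "w ! i \<in> set w"
      using that assms(1) by simp
    then have "w ! i \<in> {0, 1}"
      using assms(2) by blast
    moreover have "w ! i = 0 \<longleftrightarrow> i = k"
      using k that by (simp add: set_eq_iff) metis
    ultimately show ?thesis by auto
  qed
  have "w = replicate k 1 @ [0] @ replicate (n - k - 1) 1" (is "_ = ?u")
  proof (rule nth_equalityI)
    show "length w = length ?u"
      using \<open>k < n\<close> assms(1) by simp
    show "w ! i = ?u ! i" if "i < length w" for i
      using that w_nth nth_single_zero_word[of i n k] \<open>k < n\<close> assms(1) by simp
  qed
  then show "w \<in> T_set n"
    using \<open>k < n\<close> unfolding T_set_def by auto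
qed

theorem proposition21:
  fixes n :: nat and p :: "nat \<Rightarrow> nat"
  assumes "n \<ge> 2" and "p permutes {1..n}"
  shows "{w :: nat list. length w = n \<and> set w \<subseteq> {0, 1}
            \<and> num_curves n (word_state p w) = 2} = T_set n"
proof -
  have two_curves_iff: "num_curves n (word_state p w) = 2 \<longleftrightarrow> w \<in> T_set n"
    if len: "length w = n" and w01: "set w \<subseteq> {0, 1}" for w :: "nat list"
  proof -
    have "\<forall>j\<in>{1..n}. word_state p w j = 0 \<or> word_state p w j = 1"
      using word_state_in_set[OF assms(2) len] w01 by blast
    then have "num_curves n (word_state p w) = Suc (card {k. k < n \<and> w ! k = 0})"
      using num_curves_eq_Suc_zeros[of n] zeros_upto_word_state[OF assms(2)] assms(1) by simp
    then show ?thesis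
      using T_set_iff_one_zero[OF len w01] by simp
  qed
  have "length w = n \<and> set w \<subseteq> {0, 1}" if "w \<in> T_set n" for w :: "nat list"
    using that assms(1) unfolding T_set_def by auto
  then show ?thesis
    using two_curves_iff by blast
qed

end
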